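(* Let $A$ be a dilation, $X$ a ball quasi-Banach function space, $s\in(0,\infty)$, and $d\mu$ a Borel measure on $\mathbb R^n\times\mathbb Z$. Define $$\widetilde{\|d\mu\|}^A_X:=\sup\left\|\left\{\sum_{i\in\mathbb N}\left[\frac{\lambda_i}{\|\mathbf 1_{B^{(i)}}\|_X}\right]^s\mathbf 1_{B^{(i)}}\right\}^{1/s}\right\|_X^{-1}\sum_{j\in\mathbb N}\frac{\lambda_j|B^{(j)}|^{1/2}}{\|\mathbf 1_{B^{(j)}}\|_X}\left[\int_{\widehat{B^{(j)}}}|d\mu(x,k)|\right]^{1/2},$$ the supremum over all $\{B^{(j)}\}_{j\in\mathbb N}\subset\mathcal B$ and $\{\lambda_j\}_{j\in\mathbb N}\subset[0,\infty)$ with $\left\|\left\{\sum_{i\in\mathbb N}\left[\frac{\lambda_i}{\|\mathbf 1_{B^{(i)}}\|_X}\right]^s\mathbf 1_{B^{(i)}}\right\}^{1/s}\right\|_X\in(0,\infty)$. Then $\widetilde{\|d\mu\|}^A_X=\|d\mu\|^A_X$.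
   Context: A real $n\times n$ matrix $A$ is a dilation if all its eigenvalues have modulus $>1$; $b:=|\det A|$. Fix an open ellipsoid $\Delta$ symmetric about $0$ with $|\Delta|=1$ and $r>1$ with $\Delta\subset r\Delta\subset A\Delta$; $B_k:=A^k\Delta$, $\mathcal B:=\{x+B_k:x\in\mathbb R^n,k\in\mathbb Z\}$. Ball quasi-Banach function space: a quasi-normed space $X$ of measurable functions with quasi-norm defined on all measurable functions such that (i) $\|f\|_X=0\Rightarrow f=0$ a.e.; (ii) $|g|\le|f|$ a.e. $\Rightarrow\|g\|_X\le\|f\|_X$; (iii) $0\le f_m\uparrow f$ a.e. $\Rightarrow\|f_m\|_X\uparrow\|f\|_X$; (iv) $\mathbf 1_B\in X$ for $B\in\mathcal B$. For $B\in\mathcal B$, the tent over $B$ is $\widehat B:=\{(y,k)\in\mathbb R^n\times\mathbb Z:y+B_k\subset B\}$. For a Borel measure $d\mu$ on $\mathbb R^n\times\mathbb Z$ and $s\in(0,\infty)$, $$\|d\mu\|^A_X:=\sup\left\|\left\{\sum_{i=1}^m\left[\frac{\lambda_i}{\|\mathbf 1_{B^{(i)}}\|_X}\right]^s\mathbf 1_{B^{(i)}}\right\}^{1/s}\right\|_X^{-1}\sum_{j=1}^m\frac{\lambda_j|B^{(j)}|^{1/2}}{\|\mathbf 1_{B^{(j)}}\|_X}\left[\int_{\widehat{B^{(j)}}}|d\mu(x,k)|\right]^{1/2},$$ the supremum over $m\in\mathbb N$, $\{B^{(j)}\}_{j=1}^m\subset\mathcal B$ and $\{\lambda_j\}_{j=1}^m\subset[0,\infty)$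 with $\sum_j\lambda_j\ne0$; $d\mu$ is an anisotropic $X$–Carleson measure if this is finite. *)

theory Defs
  imports "HOL-Analysis.Analysis"
begin

definition dilation :: "real^'n^'n \<Rightarrow> bool" where
  "dilation A \<longleftrightarrow>
     (\<forall>z::complex. det (\<chi> i j. complex_of_real (A$i$j) - (if i = j then z else 0)) = 0
        \<longrightarrow> 1 < cmod z)"

text \<open>Open ellipsoid centred at 0 (hence symmetric about 0): image of the open unit ball
  under an invertible linear map.\<close>
definition open_ellipsoid0 :: "(real^'n) set \<Rightarrow> bool" where
  "open_ellipsoid0 D \<longleftrightarrow> (\<exists>M::real^'n^'n. invertible M \<and> D = (\<lambda>x. M *v x) ` ball 0 1)"

text \<open>B_k = A^k Delta for k in Z. For k < 0 (A invertible) A^k Delta = {x. A^(-k) x \<in> Delta}.\<close>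
definition Bk :: "real^'n^'n \<Rightarrow> (real^'n) set \<Rightarrow> int \<Rightarrow> (real^'n) set" where
  "Bk A D k = (if 0 \<le> k then ((\<lambda>x. A *v x) ^^ nat k) ` D
               else ((\<lambda>x. A *v x) ^^ nat (-k)) -` D)"

definition dil_balls :: "real^'n^'n \<Rightarrow> (real^'n) set \<Rightarrow> (real^'n) set set" where
  "dil_balls A D = {(\<lambda>y. x + y) ` Bk A D k | x k. True}"

definition tent :: "real^'n^'n \<Rightarrow> (real^'n) set \<Rightarrow> (real^'n) set \<Rightarrow> ((real^'n) \<times> int) set" where
  "tent A D B = {(y, k). (\<lambda>z. y + z) ` Bk A D k \<subseteq> B}"

text \<open>The quasi-norm of X is modelled as a functional N on nonnegative (extended-valued)
  Lebesgue measurable functions (by (ii) the quasi-norm only depends on |f|);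
  X = {f measurable. N |f| < \<infinity>}.\<close>
definition ball_qBfs ::
  "real^'n^'n \<Rightarrow> (real^'n) set \<Rightarrow> ((real^'n \<Rightarrow> ennreal) \<Rightarrow> ennreal) \<Rightarrow> bool" where
  "ball_qBfs A D N \<longleftrightarrow>
     \<comment> \<open>quasi-norm: homogeneity and quasi-triangle inequality\<close>
     (\<forall>f c. f \<in> borel_measurable lebesgue \<and> c \<noteq> \<infinity> \<longrightarrow> N (\<lambda>x. c * f x) = c * N f) \<and>
     (\<exists>K::ennreal. 1 \<le> K \<and> K \<noteq> \<infinity> \<and>
        (\<forall>f g. f \<in> borel_measurable lebesgue \<and> g \<in> borel_measurable lebesgue \<longrightarrow>
               N (\<lambda>x. f x + g x) \<le> K * (N f + N g))) \<and>
     \<comment> \<open>(i)\<close>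
     (\<forall>f. f \<in> borel_measurable lebesgue \<and> N f = 0 \<longrightarrow> (AE x in lebesgue. f x = 0)) \<and>
     \<comment> \<open>(ii)\<close>
     (\<forall>f g. f \<in> borel_measurable lebesgue \<and> g \<in> borel_measurable lebesgue \<and>
            (AE x in lebesgue. g x \<le> f x) \<longrightarrow> N g \<le> N f) \<and>
     \<comment> \<open>(iii)\<close>
     (\<forall>F f. (\<forall>m. F m \<in> borel_measurable lebesgue) \<and> f \<in> borel_measurable lebesgue \<and>
            (AE x in lebesgue. incseq (\<lambda>m. F m x) \<and> f x = (SUP m. F m x))
            \<longrightarrow> N f = (SUP m. N (F m))) \<and>
     \<comment> \<open>(iv)\<close>
     (\<forall>B \<in> dil_balls A D. N (indicator B) < \<infinity>)"

definition epowr :: "ennreal \<Rightarrow> real \<Rightarrow> ennreal" where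
  "epowr x p = (if x = \<infinity> then \<infinity> else ennreal (enn2real x powr p))"

definition esqrt :: "ennreal \<Rightarrow> ennreal" where
  "esqrt x = (if x = \<infinity> then \<infinity> else ennreal (sqrt (enn2real x)))"

text \<open>||1_B||_X as a real number (finite and positive for B in \<B>).\<close>
definition nind :: "((real^'n \<Rightarrow> ennreal) \<Rightarrow> ennreal) \<Rightarrow> (real^'n) set \<Rightarrow> real" where
  "nind N B = enn2real (N (indicator B))"

definition den_fin ::
  "((real^'n \<Rightarrow> ennreal) \<Rightarrow> ennreal) \<Rightarrow> real \<Rightarrow> nat \<Rightarrow> (nat \<Rightarrow> (real^'n) set) \<Rightarrow> (nat \<Rightarrow> real) \<Rightarrow> ennreal" where
  "den_fin N s m Bs lam =
     N (\<lambda>x. epowr (\<Sum>i<m. ennreal ((lam i / nind N (Bs i)) powr s) * indicator (Bs i) x) (1/s))"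

definition den_inf ::
  "((real^'n \<Rightarrow> ennreal) \<Rightarrow> ennreal) \<Rightarrow> real \<Rightarrow> (nat \<Rightarrow> (real^'n) set) \<Rightarrow> (nat \<Rightarrow> real) \<Rightarrow> ennreal" where
  "den_inf N s Bs lam =
     N (\<lambda>x. epowr (\<Sum>i. ennreal ((lam i / nind N (Bs i)) powr s) * indicator (Bs i) x) (1/s))"

definition num_term ::
  "real^'n^'n \<Rightarrow> (real^'n) set \<Rightarrow> ((real^'n \<Rightarrow> ennreal) \<Rightarrow> ennreal) \<Rightarrow> ((real^'n) \<times> int) measure
   \<Rightarrow> (real^'n) set \<Rightarrow> real \<Rightarrow> ennreal" where
  "num_term A D N \<mu> B l =
     ennreal (l * sqrt (measure lborel B) / nind N B) * esqrt (emeasure \<mu> (tent A D B))"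

definition carleson_norm ::
  "real^'n^'n \<Rightarrow> (real^'n) set \<Rightarrow> ((real^'n \<Rightarrow> ennreal) \<Rightarrow> ennreal) \<Rightarrow> real
   \<Rightarrow> ((real^'n) \<times> int) measure \<Rightarrow> ennreal" where
  "carleson_norm A D N s \<mu> =
     (SUP (m, Bs, lam) \<in> {(m, Bs, lam). 1 \<le> m \<and> (\<forall>j<m. Bs j \<in> dil_balls A D \<and> 0 \<le> lam j)
                                  \<and> (\<Sum>j<m. lam j) \<noteq> 0}.
        (\<Sum>j<m. num_term A D N \<mu> (Bs j) (lam j)) / den_fin N s m Bs lam)"

definition carleson_norm_tilde ::
  "real^'n^'n \<Rightarrow> (real^'n) set \<Rightarrow> ((real^'n \<Rightarrow> ennreal) \<Rightarrow> ennreal) \<Rightarrow> real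
   \<Rightarrow> ((real^'n) \<times> int) measure \<Rightarrow> ennreal" where
  "carleson_norm_tilde A D N s \<mu> =
     (SUP (Bs, lam) \<in> {(Bs, lam). (\<forall>j. Bs j \<in> dil_balls A D \<and> 0 \<le> lam j)
                            \<and> 0 < den_inf N s Bs lam \<and> den_inf N s Bs lam < \<infinity>}.
        (\<Sum>j. num_term A D N \<mu> (Bs j) (lam j)) / den_inf N s Bs lam)"

end

theory Submission
  imports Defs
begin

text \<open>
  A finite family of balls is a countable one padded with zero weights, which changes neither
  the numerator nor the denominator; the padded denominator is positive by (i), because every
  ball of \<open>\<B>\<close> is a nonempty open set, and finite by the quasi-triangle inequality and (iv).
  Conversely, the countable numerator is the supremum of its partial sums, and by (ii)
  truncating the family to its first \<open>m\<close> balls can only decrease the denominator, so each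
  partial quotient is dominated by a finite one.
\<close>

lemma inverse_antimono_ennreal: "(b::ennreal) \<le> c \<Longrightarrow> inverse c \<le> inverse b"
  by (simp add: less_eq_ennreal.rep_eq inverse_ennreal.rep_eq ereal_inverse_antimono)

lemma divide_left_antimono_ennreal: "(b::ennreal) \<le> c \<Longrightarrow> a / c \<le> a / b"
  unfolding divide_ennreal_def by (intro mult_left_mono inverse_antimono_ennreal) auto

lemma epowr_mono: "0 \<le> p \<Longrightarrow> x \<le> y \<Longrightarrow> epowr x p \<le> epowr y p"
  unfolding epowr_def by (cases x; cases y) (auto intro!: powr_mono2 simp: top_unique)

lemma epowr_eq_0_iff: "0 < p \<Longrightarrow> epowr x p = 0 \<longleftrightarrow> x = 0"
  unfolding epowr_def by (cases x) auto

lemma epowr_le_ennreal_powr: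
  "0 \<le> p \<Longrightarrow> 0 \<le> c \<Longrightarrow> x \<le> ennreal c \<Longrightarrow> epowr x p \<le> ennreal (c powr p)"
  unfolding epowr_def by (cases x) (auto intro!: powr_mono2 simp: top_unique)

lemma measurable_epowr:
  assumes f: "f \<in> borel_measurable M"
  shows "(\<lambda>x. epowr (f x) p) \<in> borel_measurable M"
proof -
  have "{x \<in> space M. f x = \<infinity>} \<in> sets M"
    using f by measurable
  then show ?thesis
    unfolding epowr_def using f by (intro measurable_If) auto
qed

lemma dilation_det_nonzero:
  assumes "dilation A"
  shows "det A \<noteq> 0"
proof
  assume "det A = 0"
  moreover have "det (\<chi> i j. complex_of_real (A$i$j)) = of_real (det A)"
    unfolding det_def by (simp add: of_real_sum of_real_prod)
  ultimately have "det (\<chi> i j. complex_of_real (A$i$j) - (if i = j then 0 else 0)) = 0"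
    by simp
  then show False
    using assms unfolding dilation_def by fastforce
qed

lemma open_ellipsoid0_open: "open_ellipsoid0 D \<Longrightarrow> open D"
  unfolding open_ellipsoid0_def
  by (metis invertible_def matrix_right_invertible_surjective open_ball
      open_surjective_linear_image matrix_vector_mul_linear)

lemma open_ellipsoid0_zero: "open_ellipsoid0 D \<Longrightarrow> 0 \<in> D"
  unfolding open_ellipsoid0_def by (auto intro!: image_eqI[where x=0])

lemma linear_funpow_matrix: "linear ((\<lambda>x. (A::real^'n^'n) *v x) ^^ n)"
proof (induction n)
  case 0
  show ?case by (simp add: linear_iff)
next
  case (Suc n)
  then show ?case
    using linear_compose[OF Suc.IH matrix_vector_mul_linear] by (simp add: o_def)
qed

lemma open_Bk:
  assumes "det A \<noteq> 0" and "open D"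
  shows "open (Bk A D k)"
proof -
  have "surj ((\<lambda>x. A *v x) ^^ n)" for n
    using assms(1) by (intro surj_fn)
      (meson invertible_det_nz invertible_def matrix_right_invertible_surjective)
  then have "open (((\<lambda>x. A *v x) ^^ n) ` D)" for n
    using open_surjective_linear_image[OF assms(2) linear_funpow_matrix] by blast
  moreover have "open (((\<lambda>x. A *v x) ^^ n) -` D)" for n
    using assms(2)
    by (intro open_vimage linear_continuous_on)
      (simp_all add: linear_funpow_matrix flip: linear_conv_bounded_linear)
  ultimately show ?thesis
    unfolding Bk_def by simp
qed

lemma zero_mem_Bk: "0 \<in> D \<Longrightarrow> 0 \<in> Bk A D k"
  using linear_0[OF linear_funpow_matrix] unfolding Bk_def by (force simp: image_iff)

lemma open_dil_ball: "det A \<noteq> 0 \<Longrightarrow> open D \<Longrightarrow> B \<in> dil_balls A D \<Longrightarrow> open B"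
  unfolding dil_balls_def using open_Bk open_translation by fastforce

lemma dil_ball_nonempty: "0 \<in> D \<Longrightarrow> B \<in> dil_balls A D \<Longrightarrow> B \<noteq> {}"
  unfolding dil_balls_def using zero_mem_Bk by fastforce

context
  fixes A :: "real^'n^'n" and D :: "(real^'n) set" and N :: "(real^'n \<Rightarrow> ennreal) \<Rightarrow> ennreal"
  assumes qBfs: "ball_qBfs A D N"
begin

lemma ball_qBfs_mono:
  "f \<in> borel_measurable lebesgue \<Longrightarrow> g \<in> borel_measurable lebesgue \<Longrightarrow> (\<And>x. g x \<le> f x)
    \<Longrightarrow> N g \<le> N f"
  using qBfs unfolding ball_qBfs_def by simp

lemma ball_qBfs_cmult:
  "f \<in> borel_measurable lebesgue \<Longrightarrow> c \<noteq> \<infinity> \<Longrightarrow> N (\<lambda>x. c * f x) = c * N f"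
  using qBfs unfolding ball_qBfs_def by blast

lemma ball_qBfs_indicator_finite: "B \<in> dil_balls A D \<Longrightarrow> N (indicator B) < \<infinity>"
  using qBfs unfolding ball_qBfs_def by blast

lemma ball_qBfs_nonzero:
  assumes g: "g \<in> borel_measurable lebesgue" and "open U" "x \<in> U" and "\<forall>y\<in>U. g y \<noteq> 0"
  shows "N g \<noteq> 0"
proof
  assume "N g = 0"
  then have "AE y in lebesgue. g y = 0"
    using qBfs g unfolding ball_qBfs_def by blast
  then have "AE y in lebesgue. y \<in> U \<longrightarrow> y \<in> {}"
    by eventually_elim (use assms(4) in auto)
  then show False
    using mem_closed_if_AE_lebesgue_open[OF \<open>open U\<close> closed_empty _ \<open>x \<in> U\<close>] by blast
qed

lemma ball_qBfs_sum_finite: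
  assumes "finite I" and "\<And>i. i \<in> I \<Longrightarrow> g i \<in> borel_measurable lebesgue \<and> N (g i) < \<infinity>"
  shows "N (\<lambda>x. \<Sum>i\<in>I. g i x) < \<infinity>"
  using assms
proof (induction I rule: finite_induct)
  case empty
  have "N (\<lambda>x. 0 * 0) = 0 * N (\<lambda>x. 0)"
    by (rule ball_qBfs_cmult) auto
  then show ?case by simp
next
  case (insert i I)
  obtain K :: ennreal where "K \<noteq> \<infinity>" and
    triangle: "\<And>f g. f \<in> borel_measurable lebesgue \<Longrightarrow> g \<in> borel_measurable lebesgue \<Longrightarrow>
                 N (\<lambda>x. f x + g x) \<le> K * (N f + N g)"
    using qBfs unfolding ball_qBfs_def by blast
  have "N (\<lambda>x. \<Sum>i\<in>insert i I. g i x) = N (\<lambda>x. g i x + (\<Sum>i\<in>I. g i x))"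
    using insert.hyps by simp
  also have "\<dots> \<le> K * (N (g i) + N (\<lambda>x. \<Sum>i\<in>I. g i x))"
    using insert.prems by (intro triangle borel_measurable_sum) auto
  also have "\<dots> < \<infinity>"
    using insert \<open>K \<noteq> \<infinity>\<close> by (simp add: ennreal_mult_less_top less_top)
  finally show ?case .
qed

end

lemma epowr_weighted_indicator_sum_le:
  fixes c :: "'i \<Rightarrow> real"
  assumes "finite I" and "0 < s" and "\<And>i. 0 \<le> c i"
  shows "epowr (\<Sum>i\<in>I. ennreal (c i) * indicator (Bs i) x) (1/s)
           \<le> (\<Sum>i\<in>I. ennreal ((\<Sum>j\<in>I. c j) powr (1/s)) * indicator (Bs i) x)"
proof (cases "\<exists>i\<in>I. x \<in> Bs i")
  case True
  then obtain i where i: "i \<in> I" "x \<in> Bs i" by blast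
  have "(\<Sum>i\<in>I. ennreal (c i) * indicator (Bs i) x) \<le> (\<Sum>i\<in>I. ennreal (c i))"
    by (intro sum_mono) (auto simp: indicator_def)
  also have "\<dots> = ennreal (\<Sum>j\<in>I. c j)"
    using assms(3) by (simp add: sum_ennreal)
  finally have "epowr (\<Sum>i\<in>I. ennreal (c i) * indicator (Bs i) x) (1/s)
                  \<le> ennreal ((\<Sum>j\<in>I. c j) powr (1/s)) * indicator (Bs i) x"
    using assms i by (simp add: epowr_le_ennreal_powr sum_nonneg)
  also have "\<dots> \<le> (\<Sum>i\<in>I. ennreal ((\<Sum>j\<in>I. c j) powr (1/s)) * indicator (Bs i) x)"
    using assms(1) i by (intro member_le_sum) auto
  finally show ?thesis .
next
  case False
  then show ?thesis
    using assms(2) by (simp add: epowr_eq_0_iff)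
qed

locale carleson_setting =
  fixes A :: "real^'n^'n" and D :: "(real^'n) set" and N :: "(real^'n \<Rightarrow> ennreal) \<Rightarrow> ennreal"
  assumes det_nonzero: "det A \<noteq> 0" and open_D: "open D" and zero_mem_D: "0 \<in> D"
    and qBfs: "ball_qBfs A D N"
begin

lemma dil_ball_sets: "B \<in> dil_balls A D \<Longrightarrow> B \<in> sets lebesgue"
  using open_dil_ball[OF det_nonzero open_D] by (simp add: borel_open)

lemma nind_pos:
  assumes B: "B \<in> dil_balls A D"
  shows "0 < nind N B"
proof -
  obtain x where "x \<in> B"
    using dil_ball_nonempty[OF zero_mem_D B] by blast
  then have "N (indicator B) \<noteq> 0"
    using open_dil_ball[OF det_nonzero open_D B] dil_ball_sets[OF B]
    by (intro ball_qBfs_nonzero[OF qBfs] borel_measurable_indicator) auto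
  then show ?thesis
    using ball_qBfs_indicator_finite[OF qBfs B]
    by (simp add: nind_def enn2real_positive_iff less_top[symmetric] zero_less_iff_neq_zero)
qed

lemma measurable_den_fin_integrand:
  "(\<And>i. i < m \<Longrightarrow> Bs i \<in> dil_balls A D) \<Longrightarrow>
   (\<lambda>x. epowr (\<Sum>i<m. ennreal ((lam i / nind N (Bs i)) powr s) * indicator (Bs i) x) (1/s))
     \<in> borel_measurable lebesgue"
  using dil_ball_sets by (intro measurable_epowr borel_measurable_sum) auto

lemma measurable_den_inf_integrand:
  "(\<And>i. Bs i \<in> dil_balls A D) \<Longrightarrow>
   (\<lambda>x. epowr (\<Sum>i. ennreal ((lam i / nind N (Bs i)) powr s) * indicator (Bs i) x) (1/s))
     \<in> borel_measurable lebesgue"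
  using dil_ball_sets by (intro measurable_epowr borel_measurable_suminf_order) auto

lemma den_fin_le_den_inf:
  assumes "0 < s" and "\<And>i. Bs i \<in> dil_balls A D"
  shows "den_fin N s m Bs lam \<le> den_inf N s Bs lam"
  unfolding den_fin_def den_inf_def
  using assms
  by (intro ball_qBfs_mono[OF qBfs] measurable_den_fin_integrand measurable_den_inf_integrand
      epowr_mono sum_le_suminf) (auto intro: summableI)

lemma den_fin_nonzero:
  assumes "0 < s" and BL: "\<forall>j<m. Bs j \<in> dil_balls A D \<and> 0 \<le> lam j" and "(\<Sum>j<m. lam j) \<noteq> 0"
  shows "den_fin N s m Bs lam \<noteq> 0"
proof -
  obtain j where j: "j < m" "lam j \<noteq> 0"
    using \<open>(\<Sum>j<m. lam j) \<noteq> 0\<close> by (meson lessThan_iff sum.neutral)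
  with BL have Bj: "Bs j \<in> dil_balls A D" and "0 < lam j"
    by force+
  then have weight_pos: "0 < (lam j / nind N (Bs j)) powr s"
    using nind_pos[OF Bj] by simp
  obtain x where "x \<in> Bs j"
    using dil_ball_nonempty[OF zero_mem_D Bj] by blast
  have "epowr (\<Sum>i<m. ennreal ((lam i / nind N (Bs i)) powr s) * indicator (Bs i) y) (1/s) \<noteq> 0"
    if "y \<in> Bs j" for y
  proof -
    have "0 < ennreal ((lam j / nind N (Bs j)) powr s) * indicator (Bs j) y"
      using that weight_pos by simp
    also have "\<dots> \<le> (\<Sum>i<m. ennreal ((lam i / nind N (Bs i)) powr s) * indicator (Bs i) y)"
      using j by (intro member_le_sum) auto
    finally show ?thesis
      using \<open>0 < s\<close> by (simp add: epowr_eq_0_iff)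
  qed
  then show ?thesis
    unfolding den_fin_def using BL open_dil_ball[OF det_nonzero open_D Bj] \<open>x \<in> Bs j\<close>
    by (intro ball_qBfs_nonzero[OF qBfs] measurable_den_fin_integrand) auto
qed

lemma den_fin_finite:
  assumes "0 < s" and BL: "\<forall>j<m. Bs j \<in> dil_balls A D \<and> 0 \<le> lam j"
  shows "den_fin N s m Bs lam < \<infinity>"
proof -
  define C where "C = (\<Sum>j<m. (lam j / nind N (Bs j)) powr s) powr (1/s)"
  have indicator_finite: "N (\<lambda>x. ennreal C * indicator (Bs i) x) < \<infinity>" if "i < m" for i
    using BL that dil_ball_sets ball_qBfs_indicator_finite[OF qBfs]
    by (simp add: ball_qBfs_cmult[OF qBfs] ennreal_mult_less_top)
  have "den_fin N s m Bs lam \<le> N (\<lambda>x. \<Sum>i<m. ennreal C * indicator (Bs i) x)"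
    unfolding den_fin_def C_def using BL dil_ball_sets \<open>0 < s\<close>
    by (intro ball_qBfs_mono[OF qBfs] measurable_den_fin_integrand borel_measurable_sum
        epowr_weighted_indicator_sum_le) auto
  also have "\<dots> < \<infinity>"
    using BL dil_ball_sets indicator_finite by (intro ball_qBfs_sum_finite[OF qBfs]) auto
  finally show ?thesis .
qed

lemma partial_quotient_le_carleson_norm:
  assumes "0 < s" and BL: "\<forall>j. Bs j \<in> dil_balls A D \<and> 0 \<le> lam j"
  shows "(\<Sum>j<m. num_term A D N \<mu> (Bs j) (lam j)) / den_inf N s Bs lam \<le> carleson_norm A D N s \<mu>"
proof (cases "(\<Sum>j<m. lam j) = 0")
  case True
  then have "\<forall>j<m. lam j = 0"
    using BL by (subst (asm) sum_nonneg_eq_0_iff) auto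
  then show ?thesis
    by (simp add: num_term_def)
next
  case False
  then have "1 \<le> m"
    by (cases m) auto
  have "(\<Sum>j<m. num_term A D N \<mu> (Bs j) (lam j)) / den_inf N s Bs lam
          \<le> (\<Sum>j<m. num_term A D N \<mu> (Bs j) (lam j)) / den_fin N s m Bs lam"
    using assms by (intro divide_left_antimono_ennreal den_fin_le_den_inf) auto
  also have "\<dots> \<le> carleson_norm A D N s \<mu>"
    unfolding carleson_norm_def using \<open>1 \<le> m\<close> False BL
    by (intro SUP_upper2[where i="(m, Bs, lam)"]) auto
  finally show ?thesis .
qed

lemma carleson_norm_tilde_le: "0 < s \<Longrightarrow> carleson_norm_tilde A D N s \<mu> \<le> carleson_norm A D N s \<mu>"
  unfolding carleson_norm_tilde_def
  by (intro SUP_least)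
    (auto simp: suminf_eq_SUP SUP_divide_ennreal intro!: SUP_least partial_quotient_le_carleson_norm)

lemma carleson_norm_le_tilde: "0 < s \<Longrightarrow> carleson_norm A D N s \<mu> \<le> carleson_norm_tilde A D N s \<mu>"
  unfolding carleson_norm_def
proof (intro SUP_least, clarify)
  fix m :: nat and Bs :: "nat \<Rightarrow> (real^'n) set" and lam :: "nat \<Rightarrow> real"
  assume "0 < s" "1 \<le> m" and BL: "\<forall>j<m. Bs j \<in> dil_balls A D \<and> 0 \<le> lam j"
    and "(\<Sum>j<m. lam j) \<noteq> 0"
  define Bs' where "Bs' j = (if j < m then Bs j else Bs 0)" for j
  define lam' where "lam' j = (if j < m then lam j else 0)" for j
  have "(\<Sum>i. ennreal ((lam' i / nind N (Bs' i)) powr s) * indicator (Bs' i) x)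
          = (\<Sum>i<m. ennreal ((lam i / nind N (Bs i)) powr s) * indicator (Bs i) x)" for x
    by (subst suminf_finite[of "{..<m}"]) (auto simp: Bs'_def lam'_def)
  then have den: "den_inf N s Bs' lam' = den_fin N s m Bs lam"
    unfolding den_inf_def den_fin_def by simp
  have num: "(\<Sum>j. num_term A D N \<mu> (Bs' j) (lam' j)) = (\<Sum>j<m. num_term A D N \<mu> (Bs j) (lam j))"
    by (subst suminf_finite[of "{..<m}"]) (auto simp: Bs'_def lam'_def num_term_def)
  have "\<forall>j. Bs' j \<in> dil_balls A D \<and> 0 \<le> lam' j"
    using BL \<open>1 \<le> m\<close> unfolding Bs'_def lam'_def by auto
  moreover have "0 < den_inf N s Bs' lam'" and "den_inf N s Bs' lam' < \<infinity>"
    using den den_fin_nonzero[OF \<open>0 < s\<close> BL] den_fin_finite[OF \<open>0 < s\<close> BL] \<open>(\<Sum>j<m. lam j) \<noteq> 0\<close>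
    by (simp_all add: zero_less_iff_neq_zero)
  ultimately show "(\<Sum>j<m. num_term A D N \<mu> (Bs j) (lam j)) / den_fin N s m Bs lam
                     \<le> carleson_norm_tilde A D N s \<mu>"
    unfolding carleson_norm_tilde_def num[symmetric] den[symmetric]
    by (intro SUP_upper2[where i="(Bs', lam')"]) auto
qed

end

theorem proposition6p2:
  fixes A :: "real^'n^'n" and D :: "(real^'n) set" and r :: real and s :: real
    and N :: "(real^'n \<Rightarrow> ennreal) \<Rightarrow> ennreal" and \<mu> :: "((real^'n) \<times> int) measure"
  assumes "dilation A"
    and "open_ellipsoid0 D" and "emeasure lborel D = 1"
    and "1 < r" and "D \<subseteq> (\<lambda>x. r *\<^sub>R x) ` D" and "(\<lambda>x. r *\<^sub>R x) ` D \<subseteq> (\<lambda>x. A *v x) ` D"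
    and "ball_qBfs A D N"
    and "0 < s"
    and "sets \<mu> = sets (borel \<Otimes>\<^sub>M count_space UNIV)"
  shows "carleson_norm_tilde A D N s \<mu> = carleson_norm A D N s \<mu>"
proof -
  interpret carleson_setting A D N
    using assms(1,2,7)
    by unfold_locales (simp_all add: dilation_det_nonzero open_ellipsoid0_open open_ellipsoid0_zero)
  show ?thesis
    using \<open>0 < s\<close> by (intro antisym carleson_norm_tilde_le carleson_norm_le_tilde)
qed

end
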